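(* Let $n\ge1$, $q\in\{2,3,\ldots\}$, $\alpha>0$, $N>n$, and for $s\ge0$ let $\mu_q(s)$ be the unique positive solution of $N\mu^q-ns\mu^{q-1}-q\alpha^q=0$. Let $b=\mu_q(0)=\alpha(q/N)^{1/q}$ and $a=n/N=\lim_{s\to\infty}\mu_q(s)/s$. Then for every $s>0$, $$\mu_q(s)<b+as.$$ In particular, if an inverse Wishart MAP has eigenvalue map $s\mapsto \frac{ns+\alpha'}{n+m'+p+1}$ with the same floor $\alpha'/(n+m'+p+1)=b$ and the same shrinkage $n/(n+m'+p+1)=a$, then each nonzero-eigenvalue-direction eigenvalue of the power inverse Wishart MAP is strictly smaller than the corresponding eigenvalue of this inverse Wishart MAP.
   Context: For $\Psi=\alpha I$ the power inverse Wishart MAP covariance estimator (prior parameters $(\alpha I,m,q)$, $N=n+p+qm+1$) has the same eigenvectors as the sample covariance $S$, and an eigenvalue $s$ of $S$ is mapped to $\mu_q(s)$; the inverse Wishart MAP (prior parameters $(\alpha' I,m')$) is $\frac{1}{n+m'+p+1}(nS+\alpha' I)$. The floor of such an eigenvalue map is its value at $s=0$ and the shrinkage is its limit of (value)/$s$ as $s\to\infty$. *)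

theory Defs
  imports "HOL-Analysis.Analysis"
begin

definition mu_q :: "real \<Rightarrow> real \<Rightarrow> nat \<Rightarrow> real \<Rightarrow> real \<Rightarrow> real" where
  "mu_q N n q \<alpha> s =
     (THE \<mu>. \<mu> > 0 \<and> N * \<mu> ^ q - n * s * \<mu> ^ (q - 1) - real q * \<alpha> ^ q = 0)"

end

theory Submission
  imports Defs
begin

(*
  The eigenvalue map mu_q s of the power inverse Wishart MAP is the positive root of
    F(mu) = N mu^q - K mu^(q-1) - A,   with K = n s and A = q alpha^q.
  Writing F(mu) = mu^(q-1) (N mu - K) - A shows that every positive root lies in the
  region N mu > K, where mu^(q-1) (N mu - K) is strictly increasing; hence the positive
  root is unique.  Since F(0) < 0, the intermediate value theorem shows that F(c) > 0
  forces the root below c.  With b = alpha (q/N)^(1/q), i.e. N b^q = A, the point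
  c = b + K/N gives N c - K = N b and F(c) = N b (c^(q-1) - b^(q-1)) > 0, so
  mu_q s < b + (n/N) s.  The comparison with the inverse Wishart MAP follows because
  equal floor and shrinkage make its eigenvalue map exactly s |-> b + (n/N) s.
*)

definition piw_poly :: "real \<Rightarrow> real \<Rightarrow> nat \<Rightarrow> real \<Rightarrow> real \<Rightarrow> real" where
  "piw_poly N K q A \<mu> = N * \<mu> ^ q - K * \<mu> ^ (q - 1) - A"

lemma mu_q_eq_the_root:
  "mu_q N n q \<alpha> s = (THE \<mu>. \<mu> > 0 \<and> piw_poly N (n * s) q (real q * \<alpha> ^ q) \<mu> = 0)"
  by (simp add: mu_q_def piw_poly_def)

lemma piw_poly_factored:
  assumes "q \<ge> 1"
  shows "piw_poly N K q A \<mu> = \<mu> ^ (q - 1) * (N * \<mu> - K) - A"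
proof -
  have "\<mu> ^ q = \<mu> ^ (q - 1) * \<mu>"
    using assms by (metis Suc_diff_1 less_le_trans zero_less_one power_Suc2 le_less)
  thus ?thesis by (simp add: piw_poly_def algebra_simps)
qed

lemma power_times_linear_strict_mono:
  fixes N K x y :: real
  assumes "K \<le> N * x" "x < y" "N > 0" "x > 0"
  shows "x ^ (q - 1) * (N * x - K) < y ^ (q - 1) * (N * y - K)"
proof -
  have "x ^ (q - 1) * (N * x - K) \<le> y ^ (q - 1) * (N * x - K)"
    using assms by (intro mult_right_mono power_mono) auto
  also have "\<dots> < y ^ (q - 1) * (N * y - K)"
    using assms by (intro mult_strict_left_mono) auto
  finally show ?thesis .
qed

lemma piw_root_above_pole:
  assumes "q \<ge> 1" "A > 0" "\<mu> > 0" "piw_poly N K q A \<mu> = 0"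
  shows "K < N * \<mu>"
proof (rule ccontr)
  assume "\<not> K < N * \<mu>"
  hence "\<mu> ^ (q - 1) * (N * \<mu> - K) \<le> 0"
    using assms(3) by (intro mult_nonneg_nonpos) auto
  thus False using assms by (simp add: piw_poly_factored)
qed

lemma piw_root_unique:
  assumes "q \<ge> 1" "A > 0" "N > 0"
    and "\<mu> > 0" "piw_poly N K q A \<mu> = 0" "\<nu> > 0" "piw_poly N K q A \<nu> = 0"
  shows "\<mu> = \<nu>"
proof -
  have no_smaller: False if "x < y" "x > 0" "piw_poly N K q A x = 0" "piw_poly N K q A y = 0" for x y
    using power_times_linear_strict_mono[of K N x y q] piw_root_above_pole[of q A x N K] that assms
    by (simp add: piw_poly_factored)
  show ?thesis
    using no_smaller[of \<mu> \<nu>] no_smaller[of \<nu> \<mu>] assms(4-7) by (metis linorder_neqE)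
qed

text \<open>Since the polynomial is negative at 0, a point where it is positive bounds the
  (unique) positive root strictly from above.\<close>
lemma piw_root_below:
  assumes "q \<ge> 1" "A > 0" "N > 0" "K \<ge> 0" "c > 0" "piw_poly N K q A c > 0"
  shows "(THE \<mu>. \<mu> > 0 \<and> piw_poly N K q A \<mu> = 0) < c"
proof -
  let ?F = "piw_poly N K q A"
  have "?F 0 = - (K * 0 ^ (q - 1)) - A" using assms(1) by (simp add: piw_poly_def)
  moreover have "K * 0 ^ (q - 1) \<ge> 0" using assms(4) by simp
  ultimately have F0: "?F 0 < 0" using assms(2) by linarith
  have "\<forall>x. 0 \<le> x \<and> x \<le> c \<longrightarrow> isCont ?F x"
    unfolding piw_poly_def by (auto intro!: continuous_intros)
  then obtain r where r: "0 \<le> r" "r \<le> c" "?F r = 0"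
    using IVT[of ?F 0 0 c] F0 assms(5,6) by fastforce
  have "r > 0" "r < c" using r F0 assms(6) by (auto simp: less_le)
  moreover have "(THE \<mu>. \<mu> > 0 \<and> ?F \<mu> = 0) = r"
    using \<open>r > 0\<close> r(3) piw_root_unique[OF assms(1-3)] by (intro the_equality) auto
  ultimately show ?thesis by simp
qed

text \<open>If \<open>b\<close> solves the equation with \<open>K = 0\<close> (\<open>N b^q = A\<close>), the polynomial is positive at
  \<open>b + K/N\<close> for every \<open>K > 0\<close>: there \<open>N\<mu> - K = N b\<close> while \<open>\<mu>^(q-1) > b^(q-1)\<close>.
  For \<open>q = 1\<close> the polynomial vanishes at this point, so \<open>q \<ge> 2\<close> is needed.\<close>
lemma piw_poly_pos_at_affine_bound:
  assumes "q \<ge> 2" "N > 0" "K > 0" "b > 0" "N * b ^ q = A"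
  shows "piw_poly N K q A (b + K / N) > 0"
proof -
  define c where "c = b + K / N"
  have "N * c - K = N * b" using assms(2) by (simp add: c_def field_simps)
  moreover have "A = b ^ (q - 1) * (N * b)"
    using assms(1,5) piw_poly_factored[of q N 0 A b] by (simp add: piw_poly_def)
  moreover have "b ^ (q - 1) < c ^ (q - 1)"
    using assms by (intro power_strict_mono) (auto simp: c_def)
  hence "b ^ (q - 1) * (N * b) < c ^ (q - 1) * (N * b)"
    using assms by (intro mult_strict_right_mono) auto
  ultimately show ?thesis
    using assms(1) by (simp add: piw_poly_factored c_def)
qed

lemma piw_floor_root:
  assumes "q \<ge> 1" "\<alpha> > 0" "N > 0"
  shows "N * (\<alpha> * (real q / N) powr (1 / real q)) ^ q = real q * \<alpha> ^ q"
proof -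
  have "((real q / N) powr (1 / real q)) ^ q = real q / N"
    using assms by (simp add: powr_power)
  thus ?thesis using assms(3) by (simp add: power_mult_distrib)
qed

lemma mu_q_below_affine:
  assumes "q \<ge> 2" "\<alpha> > 0" "N > 0" "n > 0" "s > 0"
  shows "mu_q N n q \<alpha> s < \<alpha> * (real q / N) powr (1 / real q) + (n / N) * s"
proof -
  let ?b = "\<alpha> * (real q / N) powr (1 / real q)"
  have "?b > 0" using assms by simp
  have "n * s / N > 0" using assms by simp
  hence "?b + n * s / N > 0" using \<open>?b > 0\<close> by linarith
  have "mu_q N n q \<alpha> s < ?b + (n * s) / N"
    unfolding mu_q_eq_the_root using assms \<open>?b > 0\<close> \<open>?b + n * s / N > 0\<close>
    by (intro piw_root_below piw_poly_pos_at_affine_bound piw_floor_root) auto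
  thus ?thesis by simp
qed

theorem mainTheorem8:
  fixes n :: nat and q :: nat and \<alpha> N :: real
  assumes "n \<ge> 1" and "q \<ge> 2" and "\<alpha> > 0" and "N > real n"
  shows "(\<forall>s::real. s > 0 \<longrightarrow>
            mu_q N (real n) q \<alpha> s < \<alpha> * (real q / N) powr (1 / real q) + (real n / N) * s)
       \<and> (\<forall>(\<alpha>'::real) (m'::real) (p::nat).
            real n + m' + real p + 1 > 0 \<longrightarrow>
            \<alpha>' / (real n + m' + real p + 1) = \<alpha> * (real q / N) powr (1 / real q) \<longrightarrow>
            real n / (real n + m' + real p + 1) = real n / N \<longrightarrow>
            (\<forall>s::real. s > 0 \<longrightarrow>
               mu_q N (real n) q \<alpha> s < (real n * s + \<alpha>') / (real n + m' + real p + 1)))"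
proof -
  have N: "N > 0" and n: "real n > 0" using assms by linarith+
  note below = mu_q_below_affine[of q \<alpha> N "real n"]
  show ?thesis
  proof (intro conjI allI impI)
    fix s :: real assume "s > 0"
    thus "mu_q N (real n) q \<alpha> s < \<alpha> * (real q / N) powr (1 / real q) + (real n / N) * s"
      using below assms N n by simp
  next
    fix \<alpha>' m' :: real and p :: nat and s :: real
    let ?D = "real n + m' + real p + 1"
    assume "?D > 0" and floor: "\<alpha>' / ?D = \<alpha> * (real q / N) powr (1 / real q)"
      and shrink: "real n / ?D = real n / N" and "s > 0"
    have "?D = N" using shrink n \<open>?D > 0\<close> N by (simp add: field_simps)
    hence "(real n * s + \<alpha>') / ?D = \<alpha> * (real q / N) powr (1 / real q) + (real n / N) * s"
      using floor by (simp add: add_divide_distrib)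
    thus "mu_q N (real n) q \<alpha> s < (real n * s + \<alpha>') / ?D"
      using below assms N n \<open>s > 0\<close> by simp
  qed
qed

end
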